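(* Under the setting of the single-position greedy algorithm (with $\boldsymbol\epsilon\in[0,1]^V$, rays $R$ with $|R|\ge K$, vectors $\mathbf p_j\in[0,1]^V$, greedy iterates $\mathbf b^t$, $f^t=\sum_i b^t_i$, $E=\sum_i\epsilon_i$, and $\mathrm{OPT}=\min_{S\subseteq R,|S|=K}\sum_i\prod_{j\in S}p_{ij}$), suppose $\mathrm{OPT}>0$ and let $\mathrm{LB}$ be any number with $0<\mathrm{LB}\le \mathrm{OPT}$. Then the approximation ratio $\rho = f^K/\mathrm{OPT}$ satisfies $$\rho \le \frac{E}{\mathrm{LB}\cdot e} + \Big(1-\frac{1}{e}\Big).$$
   Context: Greedy algorithm: $\mathbf b^0=\boldsymbol\epsilon$, $A_0=R$; at iteration $t=1,\dots,K$ choose $j_t\in\arg\min_{j\in A_{t-1}}\sum_i b^{t-1}_i p_{ij}$, set $\mathbf b^t=\mathbf b^{t-1}\odot\mathbf p_{j_t}$ (coordinatewise product), $A_t=A_{t-1}\setminus\{j_t\}$. $e$ is Euler's number. *)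

theory Defs
  imports Complex_Main
begin

text \<open>Greedy iterate: b^t_i = eps_i * prod_{s=1..t} p_{i, js s}.
  Rays are indexed by 'r, positions by 'v; p j i denotes p_{ij}.\<close>
definition greedy_b :: "('v \<Rightarrow> real) \<Rightarrow> ('r \<Rightarrow> 'v \<Rightarrow> real) \<Rightarrow> (nat \<Rightarrow> 'r) \<Rightarrow> nat \<Rightarrow> 'v \<Rightarrow> real" where
  "greedy_b eps p js t i = eps i * (\<Prod>s\<in>{1..t}. p (js s) i)"

definition greedy_run :: "'v set \<Rightarrow> 'r set \<Rightarrow> ('v \<Rightarrow> real) \<Rightarrow> ('r \<Rightarrow> 'v \<Rightarrow> real) \<Rightarrow> nat \<Rightarrow> (nat \<Rightarrow> 'r) \<Rightarrow> bool" where
  "greedy_run V R eps p K js \<longleftrightarrow>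
     (\<forall>t\<in>{1..K}. js t \<in> R - js ` {1..<t} \<and>
        (\<forall>j\<in>R - js ` {1..<t}.
           (\<Sum>i\<in>V. greedy_b eps p js (t - 1) i * p (js t) i) \<le> (\<Sum>i\<in>V. greedy_b eps p js (t - 1) i * p j i)))"

definition OPT :: "'v set \<Rightarrow> 'r set \<Rightarrow> ('r \<Rightarrow> 'v \<Rightarrow> real) \<Rightarrow> nat \<Rightarrow> real" where
  "OPT V R p K = Min {(\<Sum>i\<in>V. \<Prod>j\<in>S. p j i) | S. S \<subseteq> R \<and> card S = K}"

end

theory Submission
  imports Defs
begin

text \<open>Fix an optimal set \<open>S\<close> and compare the greedy cost \<open>f\<^sup>t\<close> with
  \<open>T = \<Sum>\<^sub>i \<epsilon>\<^sub>i \<Prod>\<^sub>j\<^sub>\<in>\<^sub>S p\<^sub>i\<^sub>j \<le> OPT\<close>.  The at most \<open>K\<close> rays of \<open>S\<close> not yet chosen are all available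
  to the greedy step, and by the Weierstrass product inequality together they would reduce
  \<open>f\<^sup>t\<close> by at least \<open>f\<^sup>t - T\<close>; the greedy ray does at least as well as their average, so
  \<open>f\<^sup>t\<^sup>+\<^sup>1 - T \<le> (1 - 1/K) (f\<^sup>t - T)\<close>.  Iterating \<open>K\<close> times from \<open>f\<^sup>0 = E\<close> gives
  \<open>f\<^sup>K \<le> T + (E - T)/e \<le> (1 - 1/e) OPT + E/e\<close>, and dividing by \<open>OPT \<ge> LB\<close> gives the claim.\<close>

lemma one_minus_prod_le_sum_one_minus:
  fixes q :: "'a \<Rightarrow> real"
  assumes "finite A" and "\<And>j. j \<in> A \<Longrightarrow> 0 \<le> q j \<and> q j \<le> 1"
  shows "1 - (\<Prod>j\<in>A. q j) \<le> (\<Sum>j\<in>A. 1 - q j)"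
  using assms
proof (induction A rule: finite_induct)
  case empty
  then show ?case by simp
next
  case (insert x F)
  have "0 \<le> (\<Prod>j\<in>F. q j)" "(\<Prod>j\<in>F. q j) \<le> 1" "0 \<le> q x" "q x \<le> 1"
    using insert.prems by (auto intro: prod_nonneg prod_le_1)
  then have "0 \<le> (1 - q x) * (1 - (\<Prod>j\<in>F. q j))"
    by simp
  then have "1 - q x * (\<Prod>j\<in>F. q j) \<le> (1 - q x) + (1 - (\<Prod>j\<in>F. q j))"
    by (simp add: algebra_simps)
  with insert show ?case by simp
qed

lemma prod_superset_le:
  fixes f :: "'a \<Rightarrow> real"
  assumes "finite B" and "A \<subseteq> B" and "\<And>b. b \<in> B \<Longrightarrow> 0 \<le> f b \<and> f b \<le> 1"
  shows "prod f B \<le> prod f A"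
proof -
  have "prod f B = prod f A * prod f (B - A)"
    using assms(1,2) by (metis prod.subset_diff mult.commute)
  also have "\<dots> \<le> prod f A"
    using assms by (intro mult_right_le_one_le prod_nonneg prod_le_1) auto
  finally show ?thesis .
qed

lemma one_minus_inverse_power_le_exp:
  assumes "n > 0"
  shows "(1 - 1 / real n) ^ n \<le> exp (- 1)"
proof -
  have "(1 - 1 / real n) ^ n \<le> exp (- 1 / real n) ^ n"
    using assms exp_ge_add_one_self[of "- 1 / real n"] by (intro power_mono) auto
  also have "\<dots> = exp (- 1)"
    using assms by (simp add: exp_of_nat_mult[symmetric])
  finally show ?thesis .
qed

lemma greedy_b_0 [simp]: "greedy_b eps p js 0 i = eps i"
  unfolding greedy_b_def by simp

lemma greedy_b_Suc: "greedy_b eps p js (Suc t) i = greedy_b eps p js t i * p (js (Suc t)) i"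
  unfolding greedy_b_def by (simp add: atLeastAtMostSuc_conv)

lemma OPT_attained:
  assumes "finite R" and "K \<le> card R"
  obtains S where "S \<subseteq> R" and "card S = K" and "OPT V R p K = (\<Sum>i\<in>V. \<Prod>j\<in>S. p j i)"
proof -
  let ?M = "{(\<Sum>i\<in>V. \<Prod>j\<in>S. p j i) | S. S \<subseteq> R \<and> card S = K}"
  have "?M \<subseteq> (\<lambda>S. \<Sum>i\<in>V. \<Prod>j\<in>S. p j i) ` Pow R"
    by auto
  then have "finite ?M"
    using assms(1) by (simp add: finite_subset)
  obtain S0 where "S0 \<subseteq> R" "card S0 = K"
    using obtain_subset_with_card_n[OF assms(2)] by metis
  then have "?M \<noteq> {}"
    by blast
  with \<open>finite ?M\<close> have "OPT V R p K \<in> ?M"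
    unfolding OPT_def by (rule Min_in)
  with that show ?thesis
    by blast
qed

locale greedy_instance =
  fixes V :: "'v set" and R :: "'r set" and eps :: "'v \<Rightarrow> real"
    and p :: "'r \<Rightarrow> 'v \<Rightarrow> real" and K :: nat and js :: "nat \<Rightarrow> 'r"
  assumes finite_R: "finite R"
    and eps_range: "\<And>i. i \<in> V \<Longrightarrow> 0 \<le> eps i \<and> eps i \<le> 1"
    and p_range: "\<And>j i. j \<in> R \<Longrightarrow> i \<in> V \<Longrightarrow> 0 \<le> p j i \<and> p j i \<le> 1"
    and run: "greedy_run V R eps p K js"
begin

abbreviation b :: "nat \<Rightarrow> 'v \<Rightarrow> real" where
  "b \<equiv> greedy_b eps p js"

definition cost :: "nat \<Rightarrow> real" where
  "cost t = (\<Sum>i\<in>V. b t i)"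

definition weighted_cost :: "'r set \<Rightarrow> real" where
  "weighted_cost S = (\<Sum>i\<in>V. eps i * (\<Prod>j\<in>S. p j i))"

lemma greedy_choice:
  assumes "s < K"
  shows "js (Suc s) \<in> R - js ` {1..s}"
    and "\<And>j. j \<in> R - js ` {1..s} \<Longrightarrow>
           (\<Sum>i\<in>V. b s i * p (js (Suc s)) i) \<le> (\<Sum>i\<in>V. b s i * p j i)"
proof -
  have "Suc s \<in> {1..K}"
    using assms by simp
  from bspec[OF run[unfolded greedy_run_def] this]
  have "js (Suc s) \<in> R - js ` {1..<Suc s} \<and>
      (\<forall>j\<in>R - js ` {1..<Suc s}.
         (\<Sum>i\<in>V. b s i * p (js (Suc s)) i) \<le> (\<Sum>i\<in>V. b s i * p j i))"
    by simp
  then show "js (Suc s) \<in> R - js ` {1..s}"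
    and "\<And>j. j \<in> R - js ` {1..s} \<Longrightarrow>
           (\<Sum>i\<in>V. b s i * p (js (Suc s)) i) \<le> (\<Sum>i\<in>V. b s i * p j i)"
    by (simp_all add: atLeastLessThanSuc_atLeastAtMost)
qed

lemma cost_Suc: "cost (Suc s) = (\<Sum>i\<in>V. b s i * p (js (Suc s)) i)"
  unfolding cost_def by (simp add: greedy_b_Suc)

lemma inj_on_chosen: "inj_on js {1..K}"
proof (rule inj_onI)
  have distinct: "js s \<noteq> js t" if "s < t" "s \<in> {1..K}" "t \<in> {1..K}" for s t
  proof -
    have "js t \<notin> js ` {1..t - 1}"
      using greedy_choice(1)[of "t - 1"] that by auto
    moreover have "js s \<in> js ` {1..t - 1}"
      using that by auto
    ultimately show ?thesis
      by auto
  qed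
  fix s t
  assume "s \<in> {1..K}" "t \<in> {1..K}" "js s = js t"
  then show "s = t"
    using distinct by (metis linorder_neqE_nat)
qed

lemma greedy_b_eq_prod_chosen:
  assumes "s \<le> K"
  shows "b s i = eps i * (\<Prod>j\<in>js ` {1..s}. p j i)"
proof -
  have "inj_on js {1..s}"
    using assms by (intro inj_on_subset[OF inj_on_chosen]) auto
  then show ?thesis
    unfolding greedy_b_def by (simp add: prod.reindex)
qed

lemma chosen_subset_R:
  assumes "s \<le> K"
  shows "js ` {1..s} \<subseteq> R"
proof
  fix j
  assume "j \<in> js ` {1..s}"
  then obtain t where "t \<in> {1..s}" "j = js (Suc (t - 1))"
    by auto
  then show "j \<in> R"
    using greedy_choice(1)[of "t - 1"] assms by auto
qed

lemma greedy_b_nonneg: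
  assumes "s \<le> K" and "i \<in> V"
  shows "0 \<le> b s i"
  using assms chosen_subset_R[OF assms(1)] eps_range p_range
  by (auto simp: greedy_b_eq_prod_chosen intro!: mult_nonneg_nonneg prod_nonneg)

lemma cost_Suc_le:
  assumes "s < K"
  shows "cost (Suc s) \<le> cost s"
  unfolding cost_Suc unfolding cost_def
  using assms greedy_choice(1)[OF assms] greedy_b_nonneg p_range
  by (intro sum_mono mult_right_le_one_le) auto

lemma marginal_gains_le:
  assumes "s < K" and "U \<subseteq> R - js ` {1..s}"
  shows "(\<Sum>j\<in>U. \<Sum>i\<in>V. b s i * (1 - p j i)) \<le> real (card U) * (cost s - cost (Suc s))"
proof -
  have "(\<Sum>j\<in>U. cost (Suc s)) \<le> (\<Sum>j\<in>U. \<Sum>i\<in>V. b s i * p j i)"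
    using assms greedy_choice(2)[OF assms(1)] by (intro sum_mono) (auto simp: cost_Suc)
  then show ?thesis
    by (simp add: cost_def algebra_simps sum_subtractf)
qed

lemma greedy_b_mult_prod_le:
  assumes "s \<le> K" and "S \<subseteq> R" and "i \<in> V"
  shows "b s i * (\<Prod>j\<in>S - js ` {1..s}. p j i) \<le> eps i * (\<Prod>j\<in>S. p j i)"
proof -
  let ?G = "js ` {1..s}"
  have "finite S"
    using assms(2) finite_R finite_subset by blast
  have "b s i * (\<Prod>j\<in>S - ?G. p j i) = eps i * (\<Prod>j\<in>?G \<union> S. p j i)"
    using \<open>finite S\<close> prod.union_disjoint[of ?G "S - ?G" "\<lambda>j. p j i"]
    by (simp add: greedy_b_eq_prod_chosen[OF assms(1)] mult.assoc)
  also have "\<dots> \<le> eps i * (\<Prod>j\<in>S. p j i)"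
    using \<open>finite S\<close> assms chosen_subset_R[OF assms(1)] eps_range p_range
    by (intro mult_left_mono prod_superset_le) auto
  finally show ?thesis .
qed

lemma excess_le_marginal_gains:
  assumes "s \<le> K" and "S \<subseteq> R"
  shows "cost s - weighted_cost S \<le> (\<Sum>j\<in>S - js ` {1..s}. \<Sum>i\<in>V. b s i * (1 - p j i))"
proof -
  let ?U = "S - js ` {1..s}"
  have "finite ?U"
    using assms(2) finite_R finite_subset by blast
  have "cost s - weighted_cost S \<le> (\<Sum>i\<in>V. b s i * (1 - (\<Prod>j\<in>?U. p j i)))"
    using sum_mono[of V "\<lambda>i. b s i * (\<Prod>j\<in>?U. p j i)" "\<lambda>i. eps i * (\<Prod>j\<in>S. p j i)"]
      greedy_b_mult_prod_le[OF assms]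
    by (simp add: cost_def weighted_cost_def algebra_simps sum_subtractf)
  also have "\<dots> \<le> (\<Sum>i\<in>V. b s i * (\<Sum>j\<in>?U. 1 - p j i))"
    using \<open>finite ?U\<close> assms greedy_b_nonneg p_range
    by (intro sum_mono mult_left_mono one_minus_prod_le_sum_one_minus) auto
  also have "\<dots> = (\<Sum>j\<in>?U. \<Sum>i\<in>V. b s i * (1 - p j i))"
    unfolding sum_distrib_left by (rule sum.swap)
  finally show ?thesis .
qed

lemma cost_step:
  assumes "s < K" and "S \<subseteq> R" and "card S \<le> K"
  shows "cost (Suc s) - weighted_cost S \<le> (1 - 1 / real K) * (cost s - weighted_cost S)"
proof -
  let ?U = "S - js ` {1..s}"
  have "finite S"
    using assms(2) finite_R finite_subset by blast
  then have "card ?U \<le> K"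
    using assms(3) card_mono[of S ?U] by auto
  have "?U \<subseteq> R - js ` {1..s}"
    using assms(2) by blast
  have "cost s - weighted_cost S \<le> real (card ?U) * (cost s - cost (Suc s))"
    using excess_le_marginal_gains[of s S] marginal_gains_le[OF assms(1) \<open>?U \<subseteq> R - js ` {1..s}\<close>]
      assms(1,2) by linarith
  also have "\<dots> \<le> real K * (cost s - cost (Suc s))"
    using \<open>card ?U \<le> K\<close> cost_Suc_le[OF assms(1)] by (intro mult_right_mono) auto
  finally have "(cost s - weighted_cost S) / real K \<le> cost s - cost (Suc s)"
    using assms(1) by (simp add: divide_le_eq mult.commute)
  moreover have "(1 - 1 / real K) * (cost s - weighted_cost S)
      = (cost s - weighted_cost S) - (cost s - weighted_cost S) / real K"
    by (simp add: left_diff_distrib)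
  ultimately show ?thesis
    by linarith
qed

lemma cost_excess_power:
  assumes "t \<le> K" and "S \<subseteq> R" and "card S \<le> K"
  shows "cost t - weighted_cost S \<le> (1 - 1 / real K) ^ t * (cost 0 - weighted_cost S)"
  using assms(1)
proof (induction t)
  case 0
  then show ?case by simp
next
  case (Suc t)
  have "0 \<le> 1 - 1 / real K"
    using Suc.prems by (simp add: field_simps)
  have "cost (Suc t) - weighted_cost S \<le> (1 - 1 / real K) * (cost t - weighted_cost S)"
    using cost_step Suc.prems assms(2,3) by simp
  also have "\<dots> \<le> (1 - 1 / real K) * ((1 - 1 / real K) ^ t * (cost 0 - weighted_cost S))"
    using Suc \<open>0 \<le> 1 - 1 / real K\<close> by (intro mult_left_mono) auto
  finally show ?case
    by simp
qed

lemma weighted_cost_le_cost_0: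
  assumes "S \<subseteq> R"
  shows "weighted_cost S \<le> cost 0"
  unfolding cost_def weighted_cost_def
  using assms eps_range p_range
  by (intro sum_mono) (auto intro!: mult_right_le_one_le prod_nonneg prod_le_1)

lemma weighted_cost_le:
  assumes "S \<subseteq> R"
  shows "weighted_cost S \<le> (\<Sum>i\<in>V. \<Prod>j\<in>S. p j i)"
  unfolding weighted_cost_def
  using assms eps_range p_range
  by (intro sum_mono) (auto intro!: mult_left_le_one_le prod_nonneg)

lemma cost_K_le:
  assumes "S \<subseteq> R" and "card S = K"
  shows "cost K \<le> weighted_cost S + exp (- 1) * (cost 0 - weighted_cost S)"
proof (cases "K = 0")
  case True
  moreover have "finite S"
    using assms(1) finite_R finite_subset by blast
  ultimately have "S = {}"
    using assms(2) by simp
  with True show ?thesis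
    by (simp add: cost_def weighted_cost_def)
next
  case False
  then have "(1 - 1 / real K) ^ K * (cost 0 - weighted_cost S)
             \<le> exp (- 1) * (cost 0 - weighted_cost S)"
    using weighted_cost_le_cost_0[OF assms(1)]
    by (intro mult_right_mono one_minus_inverse_power_le_exp) auto
  then show ?thesis
    using cost_excess_power[of K S] assms by simp
qed

end

theorem mainTheorem3:
  fixes V :: "'v set" and R :: "'r set" and eps :: "'v \<Rightarrow> real"
    and p :: "'r \<Rightarrow> 'v \<Rightarrow> real" and K :: nat and js :: "nat \<Rightarrow> 'r" and LB :: real
  assumes "finite V" and "finite R" and "card R \<ge> K"
    and "\<forall>i\<in>V. 0 \<le> eps i \<and> eps i \<le> 1"
    and "\<forall>j\<in>R. \<forall>i\<in>V. 0 \<le> p j i \<and> p j i \<le> 1"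
    and "greedy_run V R eps p K js"
    and "OPT V R p K > 0"
    and "0 < LB" and "LB \<le> OPT V R p K"
  shows "(\<Sum>i\<in>V. greedy_b eps p js K i) / OPT V R p K
           \<le> (\<Sum>i\<in>V. eps i) / (LB * exp 1) + (1 - 1 / exp 1)"
proof -
  interpret greedy_instance V R eps p K js
    using assms(2,4-6) by unfold_locales auto
  define E where "E = (\<Sum>i\<in>V. eps i)"
  define Opt where "Opt = OPT V R p K"
  obtain S where S: "S \<subseteq> R" "card S = K" and Opt_S: "Opt = (\<Sum>i\<in>V. \<Prod>j\<in>S. p j i)"
    using OPT_attained[OF assms(2,3)] unfolding Opt_def by metis
  have "0 \<le> E"
    unfolding E_def using assms(4) by (auto intro: sum_nonneg)
  have "cost K \<le> (1 - exp (- 1)) * weighted_cost S + exp (- 1) * E"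
    using cost_K_le[OF S] by (simp add: E_def cost_def algebra_simps)
  also have "\<dots> = (1 - 1 / exp 1) * weighted_cost S + E / exp 1"
    by (simp add: exp_minus inverse_eq_divide)
  also have "\<dots> \<le> (1 - 1 / exp 1) * Opt + E / exp 1"
    using weighted_cost_le[OF S(1)] Opt_S by (intro add_right_mono mult_left_mono) auto
  finally have "cost K / Opt \<le> ((1 - 1 / exp 1) * Opt + E / exp 1) / Opt"
    using assms(7) unfolding Opt_def by (intro divide_right_mono) auto
  also have "\<dots> = (1 - 1 / exp 1) + E / (Opt * exp 1)"
    using assms(7) by (simp add: Opt_def add_divide_distrib mult.commute)
  also have "E / (Opt * exp 1) \<le> E / (LB * exp 1)"
    using assms(8,9) \<open>0 \<le> E\<close> by (intro divide_left_mono) (auto simp: Opt_def)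
  finally show ?thesis
    by (simp add: cost_def E_def Opt_def)
qed

end
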